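(* Let $\mathcal{M}$ be an episodic MDP with $H\ge5$ and deterministic expert $\pi^{\operatorname{E}}$, and let $\mathcal{D}$ be $m$ i.i.d. expert trajectories, randomly divided into disjoint $\mathcal{D}_1,\mathcal{D}_1^c$ with $|\mathcal{D}_1|=|\mathcal{D}_1^c|=m/2$. Fix $\pi'\in\Pi_{\mathrm{BC}}(\mathcal{D}_1)$ and let $\mathcal{D}'_{\mathrm{env}}$ be $n'$ trajectories collected by running $\pi'$ in $\mathcal{M}$. Fix $\varepsilon,\delta\in(0,1)$. Let $$\widetilde d_h(s,a)=\frac{1}{n'}\sum_{\operatorname{tr}\in\mathcal{D}'_{\mathrm{env}}}\mathbb{I}\{\operatorname{tr}_h(\cdot,\cdot)=(s,a),\operatorname{tr}_h\in\mathbf{Tr}_h^{\mathcal{D}_1}\}+\frac{2}{m}\sum_{\operatorname{tr}\in\mathcal{D}_1^c}\mathbb{I}\{\operatorname{tr}_h(\cdot,\cdot)=(s,a),\operatorname{tr}_h\notin\mathbf{Tr}_h^{\mathcal{D}_1}\}.$$ If $m\gtrsim\frac{H^{3/2}|\mathcal{S}|}{\varepsilon}\log\big(\frac{|\mathcal{S}|H}{\delta}\big)$ and $n'\gtrsim\frac{H^2|\mathcal{S}|}{\varepsilon^2}\log\big(\frac{|\mathcal{S}|H}{\delta}\big)$, then with probability at least $1-\delta$, $\sum_{h=1}^H\|\widetilde d_h-d_h^{\pi^{\operatorname{E}}}\|_1\le\varepsilon$.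
   Context: Episodic MDP $(\mathcal{S},\mathcal{A},P,r,H,\rho)$, finite $\mathcal{S},\mathcal{A}$; episodes $s_1\sim\rho$, $a_h\sim\pi_h(\cdot|s_h)$, $s_{h+1}\sim P_h(\cdot|s_h,a_h)$. A trajectory is $\operatorname{tr}=(s_1,a_1,\dots,s_H,a_H)$; $\operatorname{tr}_h=(s_1,a_1,\dots,s_h,a_h)$ and $\operatorname{tr}_h(\cdot,\cdot)=(s_h,a_h)$. $d_h^\pi(s,a)$ is the probability that $(s_h,a_h)=(s,a)$ under $\pi$. The expert $\pi^{\operatorname{E}}$ is deterministic with action $\pi^{\operatorname{E}}_h(s)$. For a set of trajectories $\mathcal{D}'$, $\mathcal{S}_h(\mathcal{D}')$ is the set of states appearing at step $h$ in $\mathcal{D}'$ and $\mathbf{Tr}_h^{\mathcal{D}'}=\{(s_1,a_1,\dots,s_h,a_h):s_\ell\in\mathcal{S}_\ell(\mathcal{D}')\ \forall\ell\le h\}$. $\Pi_{\mathrm{BC}}(\mathcal{D}_1)$ is the set of policies $\pi$ with $\pi_h(\pi^{\operatorname{E}}_h(s)|s)=1$ for all $h$ and all $s\in\mathcal{S}_h(\mathcal{D}_1)$. $a\gtrsim b$ means $a\ge Cb$ for a sufficiently large universal constant $C$. *)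

theory Defs
  imports "HOL-Probability.Probability"
begin

(* States and actions are natural numbers drawn from explicit finite carriers S and A.
   Steps are 0-based: step h in {0..<H} corresponds to step h+1 of the paper. *)

type_synonym traj = "(nat \<times> nat) list"
type_synonym policy = "nat \<Rightarrow> nat \<Rightarrow> nat pmf"
type_synonym transition = "nat \<Rightarrow> nat \<Rightarrow> nat \<Rightarrow> nat pmf"

definition valid_mdp :: "nat set \<Rightarrow> nat set \<Rightarrow> nat pmf \<Rightarrow> transition \<Rightarrow> bool" where
  "valid_mdp S A rho P \<longleftrightarrow> finite S \<and> S \<noteq> {} \<and> finite A \<and> A \<noteq> {} \<and>
     set_pmf rho \<subseteq> S \<and> (\<forall>h s a. s \<in> S \<longrightarrow> a \<in> A \<longrightarrow> set_pmf (P h s a) \<subseteq> S)"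

definition valid_policy :: "nat set \<Rightarrow> nat set \<Rightarrow> policy \<Rightarrow> bool" where
  "valid_policy S A \<pi> \<longleftrightarrow> (\<forall>h s. s \<in> S \<longrightarrow> set_pmf (\<pi> h s) \<subseteq> A)"

definition det_policy :: "(nat \<Rightarrow> nat \<Rightarrow> nat) \<Rightarrow> policy" where
  "det_policy f = (\<lambda>h s. return_pmf (f h s))"

fun traj_from :: "transition \<Rightarrow> policy \<Rightarrow> nat \<Rightarrow> nat \<Rightarrow> nat \<Rightarrow> traj pmf" where
  "traj_from P \<pi> h 0 s = return_pmf []"
| "traj_from P \<pi> h (Suc k) s =
     bind_pmf (\<pi> h s) (\<lambda>a. bind_pmf (P h s a) (\<lambda>s'.
       map_pmf (\<lambda>rest. (s, a) # rest) (traj_from P \<pi> (Suc h) k s')))"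

definition traj_pmf :: "nat pmf \<Rightarrow> transition \<Rightarrow> policy \<Rightarrow> nat \<Rightarrow> traj pmf" where
  "traj_pmf rho P \<pi> H = bind_pmf rho (traj_from P \<pi> 0 H)"

definition occ :: "nat pmf \<Rightarrow> transition \<Rightarrow> policy \<Rightarrow> nat \<Rightarrow> nat \<Rightarrow> nat \<times> nat \<Rightarrow> real" where
  "occ rho P \<pi> H h sa = pmf (map_pmf (\<lambda>tr. tr ! h) (traj_pmf rho P \<pi> H)) sa"

fun iid_list :: "'b pmf \<Rightarrow> nat \<Rightarrow> 'b list pmf" where
  "iid_list p 0 = return_pmf []"
| "iid_list p (Suc n) = bind_pmf p (\<lambda>x. map_pmf (\<lambda>xs. x # xs) (iid_list p n))"

definition states_at :: "nat \<Rightarrow> traj list \<Rightarrow> nat set" where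
  "states_at h D' = {fst (tr ! h) | tr. tr \<in> set D'}"

definition in_Tr :: "nat \<Rightarrow> traj list \<Rightarrow> traj \<Rightarrow> bool" where
  "in_Tr h D' tr \<longleftrightarrow> (\<forall>l\<le>h. fst (tr ! l) \<in> states_at l D')"

definition in_Pi_BC :: "nat \<Rightarrow> (nat \<Rightarrow> nat \<Rightarrow> nat) \<Rightarrow> traj list \<Rightarrow> policy \<Rightarrow> bool" where
  "in_Pi_BC H piE D1 \<pi> \<longleftrightarrow>
     (\<forall>h<H. \<forall>s\<in>states_at h D1. pmf (\<pi> h s) (piE h s) = 1)"

definition d_tilde :: "nat \<Rightarrow> nat \<Rightarrow> traj list \<Rightarrow> traj list \<Rightarrow> traj list \<Rightarrow> nat \<Rightarrow> nat \<times> nat \<Rightarrow> real" where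
  "d_tilde m n' D1 D1c Denv h sa =
     (1 / real n') * (\<Sum>tr\<leftarrow>Denv. if tr ! h = sa \<and> in_Tr h D1 tr then 1 else 0)
   + (2 / real m) * (\<Sum>tr\<leftarrow>D1c. if tr ! h = sa \<and> \<not> in_Tr h D1 tr then 1 else 0)"

definition bc_experiment :: "nat pmf \<Rightarrow> transition \<Rightarrow> (nat \<Rightarrow> nat \<Rightarrow> nat) \<Rightarrow> nat \<Rightarrow>
    (traj list \<Rightarrow> policy) \<Rightarrow> nat \<Rightarrow> nat \<Rightarrow> (traj list \<times> traj list \<times> traj list) pmf" where
  "bc_experiment rho P piE H sel m n' =
     bind_pmf (iid_list (traj_pmf rho P (det_policy piE) H) m) (\<lambda>D.
     bind_pmf (pmf_of_set {I. I \<subseteq> {..<m} \<and> card I = m div 2}) (\<lambda>I.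
       let D1 = map (\<lambda>i. D ! i) (filter (\<lambda>i. i \<in> I) [0..<m]);
           D1c = map (\<lambda>i. D ! i) (filter (\<lambda>i. i \<notin> I) [0..<m])
       in map_pmf (\<lambda>Denv. (D1, D1c, Denv)) (iid_list (traj_pmf rho P (sel D1) H) n')))"

end

theory Submission
  imports Defs
begin

(* Split d_h(s, piE h s) according to whether the trajectory prefix tr_h lies in Tr_h^{D1}.
   A policy in Pi_BC(D1) agrees with the expert on every state seen in D1, so up to the first
   step outside Tr^{D1} its trajectories have the same law as the expert's: the part inside
   Tr_h^{D1} is an occupancy of pi' and is estimated by the rollouts Denv, the part outside by
   the independent half D1c.  Both counts are binomial, and a Chernoff bound with a
   Bernstein-type band |K - n q| <= 2 sqrt (n q L) + 2 L (failure probability 2 exp (-L))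
   controls relative errors.  For the first part this costs n' ~ H^2 |S| L / eps^2.  For the
   second part the mass outside Tr_h^{D1} is small: with high probability every state missing
   from D1 has expert probability at most L / k, so this mass is at most H |S| L / k; weighing
   it against the deviation terms with factor 1 / sqrt H yields m ~ H^(3/2) |S| L / eps.
   Union bounds over the H |S| events of each sample and L = ln (5 |S| H / delta) finish. *)

section \<open>Bernstein-type bounds for binomial counts\<close>

lemma exp_le_one_plus_self_plus_square:
  fixes t :: real
  assumes "\<bar>t\<bar> \<le> 1"
  shows "exp t \<le> 1 + t + t\<^sup>2"
proof (cases "t \<ge> 0")
  case True
  then show ?thesis using exp_bound[of t] assms by simp
next
  case False
  define u where "u = - t"
  have u: "0 \<le> u" "u \<le> 1" using False assms by (auto simp: u_def)
  have "exp t = 1 / exp u" by (simp add: u_def exp_minus field_simps)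
  also have "\<dots> \<le> 1 / (1 + u)"
    using u by (intro divide_left_mono) (auto simp: add_pos_nonneg)
  also have "\<dots> \<le> 1 - u + u\<^sup>2"
  proof -
    have "1 \<le> (1 - u + u\<^sup>2) * (1 + u)" using u by (simp add: algebra_simps power2_eq_square power3_eq_cube)
    then show ?thesis using u by (simp add: field_simps)
  qed
  finally show ?thesis by (simp add: u_def)
qed

lemma binomial_pmf_exp_moment:
  assumes "q \<in> {0..1}"
  shows "(\<Sum>k\<le>n. pmf (binomial_pmf n q) k * exp (t * real k)) = (q * exp t + (1 - q)) ^ n"
proof -
  have "(q * exp t + (1 - q)) ^ n = (\<Sum>k\<le>n. of_nat (n choose k) * (q * exp t) ^ k * (1 - q) ^ (n - k))"
    by (rule binomial_ring)
  also have "\<dots> = (\<Sum>k\<le>n. pmf (binomial_pmf n q) k * exp (t * real k))"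
    using assms by (intro sum.cong refl)
      (simp add: power_mult_distrib exp_of_nat_mult[symmetric] mult.commute mult.left_commute)
  finally show ?thesis by simp
qed

lemma binomial_pmf_chernoff:
  assumes q: "q \<in> {0..1}" and t: "\<bar>t\<bar> \<le> 1"
  shows "measure_pmf.prob (binomial_pmf n q) {k. b \<le> t * real k} \<le> exp (- b + real n * q * (t + t\<^sup>2))"
proof -
  let ?B = "binomial_pmf n q"
  let ?A = "{k. b \<le> t * real k} \<inter> {..n}"
  have "measure_pmf.prob ?B {k. b \<le> t * real k} = measure_pmf.prob ?B ?A"
    using q by (intro measure_prob_cong_0) (auto simp: binomial_eq_0)
  also have "\<dots> = sum (pmf ?B) ?A"
    by (rule measure_measure_pmf_finite) auto
  also have "\<dots> \<le> (\<Sum>k\<in>?A. pmf ?B k * exp (t * real k - b))"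
  proof (rule sum_mono)
    fix k assume "k \<in> ?A"
    then have "1 \<le> exp (t * real k - b)" by simp
    then show "pmf ?B k \<le> pmf ?B k * exp (t * real k - b)"
      using mult_left_mono[of 1 _ "pmf ?B k"] by simp
  qed
  also have "\<dots> \<le> (\<Sum>k\<le>n. pmf ?B k * exp (t * real k - b))"
    by (intro sum_mono2) auto
  also have "\<dots> = exp (- b) * (\<Sum>k\<le>n. pmf ?B k * exp (t * real k))"
    by (simp add: sum_distrib_left exp_diff exp_minus field_simps)
  also have "\<dots> = exp (- b) * (q * exp t + (1 - q)) ^ n"
    by (simp add: binomial_pmf_exp_moment[OF q])
  also have "\<dots> \<le> exp (- b) * exp (q * (t + t\<^sup>2)) ^ n"
  proof -
    have "q * exp t + (1 - q) \<le> 1 + q * (t + t\<^sup>2)"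
      using mult_left_mono[OF exp_le_one_plus_self_plus_square[OF t], of q] q by (simp add: algebra_simps)
    also have "\<dots> \<le> exp (q * (t + t\<^sup>2))"
      by (rule exp_ge_add_one_self)
    finally show ?thesis
      using q by (intro mult_left_mono power_mono) auto
  qed
  also have "\<dots> = exp (- b + real n * q * (t + t\<^sup>2))"
    by (simp add: mult_ac flip: exp_of_nat_mult exp_add)
  finally show ?thesis .
qed

lemma chernoff_parameter:
  fixes \<mu> L :: real
  assumes "0 \<le> \<mu>" "0 \<le> L"
  defines "s \<equiv> if \<mu> \<le> L then 1 else sqrt (L / \<mu>)"
  shows "0 \<le> s" "s \<le> 1" "L \<le> s * (2 * sqrt (\<mu> * L) + 2 * L) - \<mu> * s\<^sup>2"
proof -
  show "0 \<le> s" "s \<le> 1"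
    using assms(2) by (auto simp: s_def real_sqrt_le_1_iff)
  have "0 \<le> sqrt (\<mu> * L)"
    using assms(1,2) by simp
  show "L \<le> s * (2 * sqrt (\<mu> * L) + 2 * L) - \<mu> * s\<^sup>2"
  proof (cases "\<mu> \<le> L")
    case True
    then have "s * (2 * sqrt (\<mu> * L) + 2 * L) - \<mu> * s\<^sup>2 = 2 * sqrt (\<mu> * L) + 2 * L - \<mu>"
      by (simp add: s_def)
    with True \<open>0 \<le> sqrt (\<mu> * L)\<close> show ?thesis
      by linarith
  next
    case False
    then have "\<mu> * s\<^sup>2 = L" "s * sqrt (\<mu> * L) = L"
      using assms(2) by (simp_all add: s_def real_sqrt_mult[symmetric] field_simps)
    moreover have "0 \<le> s * L"
      using \<open>0 \<le> s\<close> assms(2) by simp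
    ultimately show ?thesis
      by (simp add: distrib_left)
  qed
qed

lemma binomial_pmf_one_sided_tail:
  assumes q: "q \<in> {0..1}" and L: "0 \<le> L" and \<sigma>: "\<sigma> \<in> {-1, 1}"
  shows "measure_pmf.prob (binomial_pmf n q)
           {k. 2 * sqrt (real n * q * L) + 2 * L \<le> \<sigma> * (real k - real n * q)} \<le> exp (- L)"
proof -
  define \<mu> where "\<mu> = real n * q"
  define x where "x = 2 * sqrt (\<mu> * L) + 2 * L"
  have "0 \<le> \<mu>" using q by (simp add: \<mu>_def)
  \<comment> \<open>Chernoff bound with \<open>t = \<sigma> * s\<close>, where \<open>s\<close> minimises the exponent (truncated at 1)\<close>
  obtain s where s: "0 \<le> s" "s \<le> 1" and key: "L \<le> s * x - \<mu> * s\<^sup>2"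
    using chernoff_parameter[OF \<open>0 \<le> \<mu>\<close> L] unfolding x_def by blast
  have "{k. x \<le> \<sigma> * (real k - \<mu>)} \<subseteq> {k. s * x + \<sigma> * s * \<mu> \<le> (\<sigma> * s) * real k}"
  proof
    fix k assume "k \<in> {k. x \<le> \<sigma> * (real k - \<mu>)}"
    then have "s * x \<le> s * (\<sigma> * (real k - \<mu>))" using s(1) by (simp add: mult_left_mono)
    then show "k \<in> {k. s * x + \<sigma> * s * \<mu> \<le> (\<sigma> * s) * real k}" by (simp add: algebra_simps)
  qed
  then have "measure_pmf.prob (binomial_pmf n q) {k. x \<le> \<sigma> * (real k - \<mu>)}
      \<le> measure_pmf.prob (binomial_pmf n q) {k. s * x + \<sigma> * s * \<mu> \<le> (\<sigma> * s) * real k}"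
    by (rule measure_pmf.finite_measure_mono) simp
  also have "\<dots> \<le> exp (- (s * x + \<sigma> * s * \<mu>) + \<mu> * (\<sigma> * s + (\<sigma> * s)\<^sup>2))"
  proof -
    have "\<bar>\<sigma> * s\<bar> \<le> 1" using \<sigma> s by auto
    from binomial_pmf_chernoff[OF q this, of n "s * x + \<sigma> * s * \<mu>"] show ?thesis by (simp add: \<mu>_def)
  qed
  also have "- (s * x + \<sigma> * s * \<mu>) + \<mu> * (\<sigma> * s + (\<sigma> * s)\<^sup>2) = - (s * x - \<mu> * s\<^sup>2)"
    using \<sigma> by (auto simp: algebra_simps power_mult_distrib)
  also have "exp \<dots> \<le> exp (- L)"
    using key by simp
  finally show ?thesis by (simp add: \<mu>_def x_def)
qed

lemma binomial_pmf_deviation: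
  assumes q: "q \<in> {0..1}" and L: "0 \<le> L"
  shows "measure_pmf.prob (binomial_pmf n q)
           {k. 2 * sqrt (real n * q * L) + 2 * L < \<bar>real k - real n * q\<bar>} \<le> 2 * exp (- L)"
proof -
  let ?tail = "\<lambda>\<sigma>. {k. 2 * sqrt (real n * q * L) + 2 * L \<le> \<sigma> * (real k - real n * q)}"
  have "measure_pmf.prob (binomial_pmf n q)
          {k. 2 * sqrt (real n * q * L) + 2 * L < \<bar>real k - real n * q\<bar>}
      \<le> measure_pmf.prob (binomial_pmf n q) (?tail 1 \<union> ?tail (-1))"
    by (rule measure_pmf.finite_measure_mono) auto
  also have "\<dots> \<le> measure_pmf.prob (binomial_pmf n q) (?tail 1) + measure_pmf.prob (binomial_pmf n q) (?tail (-1))"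
    by (rule measure_Un_le) auto
  also have "\<dots> \<le> 2 * exp (- L)"
    using binomial_pmf_one_sided_tail[OF q L, of 1 n] binomial_pmf_one_sided_tail[OF q L, of "-1" n] by simp
  finally show ?thesis .
qed

section \<open>Independent samples\<close>

lemma iid_list_eq_replicate_pmf: "iid_list p n = replicate_pmf n p"
  by (induction n) (auto simp: map_pmf_def)

lemma replicate_pmf_map_pmf: "replicate_pmf n (map_pmf f p) = map_pmf (map f) (replicate_pmf n p)"
  by (induction n) (auto simp: map_pmf_def bind_assoc_pmf bind_return_pmf)

lemma map_pmf_eq_bernoulli_pmf: "map_pmf P p = bernoulli_pmf (measure_pmf.prob p {x. P x})"
proof (rule pmf_eqI)
  fix b
  have "measure_pmf.prob p {x. \<not> P x} = 1 - measure_pmf.prob p {x. P x}"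
    using measure_pmf.prob_compl[of "{x. P x}" p] by (simp add: Compl_eq_Diff_UNIV[symmetric] Collect_neg_eq)
  then show "pmf (map_pmf P p) b = pmf (bernoulli_pmf (measure_pmf.prob p {x. P x})) b"
    by (cases b) (simp_all add: pmf_map vimage_def)
qed

lemma map_pmf_count_replicate_pmf:
  "map_pmf (\<lambda>xs. length (filter P xs)) (replicate_pmf n p) = binomial_pmf n (measure_pmf.prob p {x. P x})"
  by (simp add: binomial_pmf_altdef map_pmf_eq_bernoulli_pmf[symmetric] replicate_pmf_map_pmf
      pmf.map_comp o_def filter_map)

lemma prob_replicate_pmf_never:
  "measure_pmf.prob (replicate_pmf n p) {xs. \<forall>x\<in>set xs. \<not> P x} \<le> exp (- real n * measure_pmf.prob p {x. P x})"
proof -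
  let ?q = "measure_pmf.prob p {x. P x}"
  have "measure_pmf.prob (replicate_pmf n p) {xs. \<forall>x\<in>set xs. \<not> P x}
      = measure_pmf.prob (map_pmf (\<lambda>xs. length (filter P xs)) (replicate_pmf n p)) {0}"
    by (simp add: vimage_def filter_empty_conv)
  also have "\<dots> = (1 - ?q) ^ n"
    by (simp add: map_pmf_count_replicate_pmf measure_pmf_single)
  also have "\<dots> \<le> exp (- ?q) ^ n"
    using exp_ge_add_one_self[of "- ?q"] by (intro power_mono) auto
  also have "\<dots> = exp (- real n * ?q)"
    by (simp flip: exp_of_nat_mult)
  finally show ?thesis .
qed

definition count_concentrated :: "real \<Rightarrow> 'a pmf \<Rightarrow> ('a \<Rightarrow> bool) \<Rightarrow> 'a list \<Rightarrow> bool" where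
  "count_concentrated L p P xs \<longleftrightarrow>
     \<bar>real (length (filter P xs)) - real (length xs) * measure_pmf.prob p {x. P x}\<bar>
       \<le> 2 * sqrt (real (length xs) * measure_pmf.prob p {x. P x} * L) + 2 * L"

lemma prob_not_count_concentrated:
  assumes "0 \<le> L"
  shows "measure_pmf.prob (replicate_pmf n p) {xs. \<not> count_concentrated L p P xs} \<le> 2 * exp (- L)"
proof -
  let ?q = "measure_pmf.prob p {x. P x}"
  have "measure_pmf.prob (replicate_pmf n p) {xs. \<not> count_concentrated L p P xs}
      = measure_pmf.prob (map_pmf (\<lambda>xs. length (filter P xs)) (replicate_pmf n p))
          {k. 2 * sqrt (real n * ?q * L) + 2 * L < \<bar>real k - real n * ?q\<bar>}"
    by (subst measure_map_pmf, rule measure_prob_cong_0)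
      (auto simp: count_concentrated_def set_replicate_pmf not_le pmf_eq_0_set_pmf)
  also have "\<dots> \<le> 2 * exp (- L)"
    unfolding map_pmf_count_replicate_pmf by (rule binomial_pmf_deviation) (simp_all add: assms)
  finally show ?thesis .
qed

lemma prob_ex_not_count_concentrated:
  assumes "0 \<le> L" and "finite I"
  shows "measure_pmf.prob (replicate_pmf n p) {xs. \<exists>i\<in>I. \<not> count_concentrated L p (P i) xs}
           \<le> real (card I) * (2 * exp (- L))"
proof -
  have "measure_pmf.prob (replicate_pmf n p) {xs. \<exists>i\<in>I. \<not> count_concentrated L p (P i) xs}
      = measure_pmf.prob (replicate_pmf n p) (\<Union>i\<in>I. {xs. \<not> count_concentrated L p (P i) xs})"
    by (simp add: Collect_bex_eq)
  also have "\<dots> \<le> (\<Sum>i\<in>I. measure_pmf.prob (replicate_pmf n p) {xs. \<not> count_concentrated L p (P i) xs})"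
    by (rule measure_UNION_le) (simp_all add: assms)
  also have "\<dots> \<le> (\<Sum>i\<in>I. 2 * exp (- L))"
    by (intro sum_mono prob_not_count_concentrated assms)
  finally show ?thesis by simp
qed

lemma nths_conv_map_nth: "nths xs I = map ((!) xs) (filter (\<lambda>i. i \<in> I) [0..<length xs])"
proof (induction xs rule: rev_induct)
  case (snoc x xs)
  have "map ((!) (xs @ [x])) (filter (\<lambda>i. i \<in> I) [0..<length xs])
      = map ((!) xs) (filter (\<lambda>i. i \<in> I) [0..<length xs])"
    by (intro map_cong refl) (simp add: nth_append)
  then show ?case
    using snoc by (simp add: nths_append)
qed simp

lemma pair_pmf_replicate_pmf_Suc_left:
  "pair_pmf (replicate_pmf (Suc a) p) (replicate_pmf b p)
     = bind_pmf p (\<lambda>x. map_pmf (\<lambda>(xs, ys). (x # xs, ys)) (pair_pmf (replicate_pmf a p) (replicate_pmf b p)))"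
  by (simp add: pair_pmf_def map_pmf_def bind_assoc_pmf bind_return_pmf)

lemma pair_pmf_replicate_pmf_Suc_right:
  "pair_pmf (replicate_pmf a p) (replicate_pmf (Suc b) p)
     = bind_pmf p (\<lambda>x. map_pmf (\<lambda>(xs, ys). (xs, x # ys)) (pair_pmf (replicate_pmf a p) (replicate_pmf b p)))"
  by (simp add: pair_pmf_def map_pmf_def bind_assoc_pmf bind_return_pmf bind_commute_pmf[of _ p])

lemma map_pmf_nths_replicate_pmf:
  "map_pmf (\<lambda>xs. (nths xs I, nths xs (- I))) (replicate_pmf n p)
     = pair_pmf (replicate_pmf (card {i \<in> I. i < n}) p) (replicate_pmf (card {i \<in> - I. i < n}) p)"
proof (induction n arbitrary: I)
  case 0
  then show ?case by (simp add: pair_return_pmf1)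
next
  case (Suc n)
  define J where "J = {j. Suc j \<in> I}"
  have nths_Cons_J: "nths (x # xs) I = (if 0 \<in> I then x # nths xs J else nths xs J)"
    "nths (x # xs) (- I) = (if 0 \<in> I then nths xs (- J) else x # nths xs (- J))" for x xs
    by (auto simp: nths_Cons J_def Collect_neg_eq)
  have split: "map_pmf (\<lambda>xs. (nths xs I, nths xs (- I))) (replicate_pmf (Suc n) p)
      = bind_pmf p (\<lambda>x. map_pmf (\<lambda>(xs, ys). if 0 \<in> I then (x # xs, ys) else (xs, x # ys))
          (map_pmf (\<lambda>xs. (nths xs J, nths xs (- J))) (replicate_pmf n p)))"
    by (cases "0 \<in> I") (simp_all add: map_pmf_def bind_assoc_pmf bind_return_pmf nths_Cons_J)
  show ?case
  proof (cases "0 \<in> I")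
    case True
    have "card {i \<in> I. i < Suc n} = Suc (card {i \<in> J. i < n})"
      "card {i \<in> - I. i < Suc n} = card {i \<in> - J. i < n}"
      using card_less_Suc[OF True] card_less_Suc2[of "- I" n] True by (simp_all add: J_def)
    with True show ?thesis
      unfolding split Suc.IH by (simp add: pair_pmf_replicate_pmf_Suc_left del: replicate_pmf.simps)
  next
    case False
    have "card {i \<in> I. i < Suc n} = card {i \<in> J. i < n}"
      "card {i \<in> - I. i < Suc n} = Suc (card {i \<in> - J. i < n})"
      using card_less_Suc2[OF False] card_less_Suc[of "- I" n] False by (simp_all add: J_def)
    with False show ?thesis
      unfolding split Suc.IH by (simp add: pair_pmf_replicate_pmf_Suc_right del: replicate_pmf.simps)
  qed
qed

lemma prob_bind_le:
  assumes "\<And>x. x \<in> set_pmf M \<Longrightarrow> measure_pmf.prob (N x) A \<le> c"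
  shows "measure_pmf.prob (bind_pmf M N) A \<le> c"
proof -
  obtain x where x: "x \<in> set_pmf M" using set_pmf_not_empty[of M] by blast
  have "0 \<le> c" using assms[OF x] measure_nonneg order_trans by blast
  have "emeasure (bind_pmf M N) A = (\<integral>\<^sup>+x. emeasure (N x) A \<partial>M)" by simp
  also have "\<dots> \<le> (\<integral>\<^sup>+x. ennreal c \<partial>M)"
    using assms
    by (intro nn_integral_mono_AE) (auto simp: AE_measure_pmf_iff measure_pmf.emeasure_eq_measure intro!: ennreal_leI)
  finally show ?thesis
    using \<open>0 \<le> c\<close> by (simp add: measure_pmf.emeasure_eq_measure)
qed

lemma prob_three_stage_sampling_ge:
  fixes X :: "'a pmf" and Y :: "'b pmf" and Z :: "'a \<Rightarrow> 'c pmf"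
  assumes "measure_pmf.prob X {x. \<not> Q\<^sub>1 x} \<le> e\<^sub>1"
    and "\<And>x. x \<in> set_pmf X \<Longrightarrow> measure_pmf.prob Y {y. \<not> Q\<^sub>2 x y} \<le> e\<^sub>2"
    and "\<And>x. x \<in> set_pmf X \<Longrightarrow> measure_pmf.prob (Z x) {z. \<not> Q\<^sub>3 x z} \<le> e\<^sub>3"
    and "\<And>x y z. x \<in> set_pmf X \<Longrightarrow> y \<in> set_pmf Y \<Longrightarrow> z \<in> set_pmf (Z x) \<Longrightarrow>
           Q\<^sub>1 x \<Longrightarrow> Q\<^sub>2 x y \<Longrightarrow> Q\<^sub>3 x z \<Longrightarrow> (x, y, z) \<in> G"
  shows "measure_pmf.prob (bind_pmf X (\<lambda>x. bind_pmf Y (\<lambda>y. map_pmf (\<lambda>z. (x, y, z)) (Z x)))) G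
           \<ge> 1 - (e\<^sub>1 + e\<^sub>2 + e\<^sub>3)"
proof -
  define W where "W = bind_pmf X (\<lambda>x. bind_pmf Y (\<lambda>y. map_pmf (\<lambda>z. (x, y, z)) (Z x)))"
  let ?B\<^sub>1 = "{w. \<not> Q\<^sub>1 (fst w)}"
  let ?B\<^sub>2 = "{w. \<not> Q\<^sub>2 (fst w) (fst (snd w))}"
  let ?B\<^sub>3 = "{w. \<not> Q\<^sub>3 (fst w) (snd (snd w))}"
  have "measure_pmf.prob W ?B\<^sub>1 = measure_pmf.prob (map_pmf fst W) {x. \<not> Q\<^sub>1 x}"
    by (simp add: vimage_def)
  also have "map_pmf fst W = X"
    by (simp add: W_def map_bind_pmf pmf.map_comp o_def bind_return_pmf')
  finally have B\<^sub>1: "measure_pmf.prob W ?B\<^sub>1 \<le> e\<^sub>1"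
    using assms(1) by simp
  have "measure_pmf.prob W ?B\<^sub>2 = measure_pmf.prob (map_pmf (\<lambda>w. (fst w, fst (snd w))) W) {(x, y). \<not> Q\<^sub>2 x y}"
    by (simp add: vimage_def)
  also have "map_pmf (\<lambda>w. (fst w, fst (snd w))) W = bind_pmf X (\<lambda>x. map_pmf (\<lambda>y. (x, y)) Y)"
    by (simp add: W_def map_bind_pmf pmf.map_comp o_def) (simp add: map_pmf_def)
  finally have B\<^sub>2: "measure_pmf.prob W ?B\<^sub>2 \<le> e\<^sub>2"
    using assms(2) by (auto intro: prob_bind_le simp: vimage_def)
  have "measure_pmf.prob W ?B\<^sub>3 = measure_pmf.prob (map_pmf (\<lambda>w. (fst w, snd (snd w))) W) {(x, z). \<not> Q\<^sub>3 x z}"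
    by (simp add: vimage_def)
  also have "map_pmf (\<lambda>w. (fst w, snd (snd w))) W = bind_pmf X (\<lambda>x. map_pmf (\<lambda>z. (x, z)) (Z x))"
    by (simp add: W_def map_bind_pmf pmf.map_comp o_def)
  finally have B\<^sub>3: "measure_pmf.prob W ?B\<^sub>3 \<le> e\<^sub>3"
    using assms(3) by (auto intro: prob_bind_le simp: vimage_def)
  have "- G \<inter> set_pmf W \<subseteq> ?B\<^sub>1 \<union> ?B\<^sub>2 \<union> ?B\<^sub>3"
    using assms(4) by (auto simp: W_def)
  then have "measure_pmf.prob W (- G) \<le> measure_pmf.prob W (?B\<^sub>1 \<union> ?B\<^sub>2 \<union> ?B\<^sub>3)"
    by (subst measure_Int_set_pmf[symmetric]) (rule measure_pmf.finite_measure_mono, auto)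
  also have "\<dots> \<le> e\<^sub>1 + e\<^sub>2 + e\<^sub>3"
    using measure_Un_le[of "?B\<^sub>1 \<union> ?B\<^sub>2" W ?B\<^sub>3] measure_Un_le[of ?B\<^sub>1 W ?B\<^sub>2] B\<^sub>1 B\<^sub>2 B\<^sub>3
    by simp
  finally show ?thesis
    using measure_pmf.prob_compl[of G W] by (simp add: W_def Compl_eq_Diff_UNIV)
qed

section \<open>Trajectories of behavioural cloning policies\<close>

lemma set_pmf_traj_from:
  "tr \<in> set_pmf (traj_from P \<pi> j k s) \<Longrightarrow> i < k \<Longrightarrow> snd (tr ! i) \<in> set_pmf (\<pi> (j + i) (fst (tr ! i)))"
proof (induction k arbitrary: i j s tr)
  case (Suc k)
  then obtain a s' rest where "a \<in> set_pmf (\<pi> j s)" and rest: "rest \<in> set_pmf (traj_from P \<pi> (Suc j) k s')"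
    and "tr = (s, a) # rest"
    by auto
  with Suc.prems(2) Suc.IH[OF rest] show ?case
    by (cases i) auto
qed simp

lemma set_pmf_traj_from_states:
  assumes "valid_mdp S A rho P" "valid_policy S A \<pi>"
  shows "s \<in> S \<Longrightarrow> tr \<in> set_pmf (traj_from P \<pi> j k s) \<Longrightarrow> i < k \<Longrightarrow> fst (tr ! i) \<in> S"
proof (induction k arbitrary: i j s tr)
  case (Suc k)
  then obtain a s' rest where "a \<in> set_pmf (\<pi> j s)" "s' \<in> set_pmf (P j s a)"
    and "rest \<in> set_pmf (traj_from P \<pi> (Suc j) k s')" and "tr = (s, a) # rest"
    by auto
  moreover from this have "s' \<in> S"
    using assms Suc.prems(1) unfolding valid_mdp_def valid_policy_def by blast
  ultimately show ?case
    using Suc by (cases i) auto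
qed simp

lemma set_pmf_traj_pmf:
  assumes "valid_mdp S A rho P" "valid_policy S A \<pi>" "tr \<in> set_pmf (traj_pmf rho P \<pi> H)" "h < H"
  shows "fst (tr ! h) \<in> S" "snd (tr ! h) \<in> set_pmf (\<pi> h (fst (tr ! h)))"
proof -
  from assms(3) obtain s where "s \<in> set_pmf rho" "tr \<in> set_pmf (traj_from P \<pi> 0 H s)"
    by (auto simp: traj_pmf_def)
  moreover from this assms(1) have "s \<in> S" by (auto simp: valid_mdp_def)
  ultimately show "fst (tr ! h) \<in> S" "snd (tr ! h) \<in> set_pmf (\<pi> h (fst (tr ! h)))"
    using set_pmf_traj_from[of tr P \<pi> 0 H s h] set_pmf_traj_from_states[OF assms(1,2)] assms(4) by auto
qed

definition step_within :: "(nat \<Rightarrow> nat set) \<Rightarrow> nat \<Rightarrow> nat \<Rightarrow> traj \<Rightarrow> (nat \<times> nat) option" where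
  "step_within G j i tr = (if \<forall>l\<le>i. fst (tr ! l) \<in> G (j + l) then Some (tr ! i) else None)"

lemma step_within_Cons:
  "step_within G j 0 (x # tr) = (if fst x \<in> G j then Some x else None)"
  "step_within G j (Suc i) (x # tr) = (if fst x \<in> G j then step_within G (Suc j) i tr else None)"
  by (auto simp: step_within_def simp flip: less_Suc_eq_le simp add: All_less_Suc2)

lemma map_pmf_step_within_traj_from:
  assumes "\<And>l s. s \<in> G l \<Longrightarrow> \<pi> l s = \<pi>' l s" and "i < k"
  shows "map_pmf (step_within G j i) (traj_from P \<pi> j k s) = map_pmf (step_within G j i) (traj_from P \<pi>' j k s)"
  using assms(2)
proof (induction k arbitrary: i j s)
  case (Suc k)
  show ?case
  proof (cases "s \<in> G j")
    case False
    then show ?thesis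
      by (cases i) (simp_all add: map_bind_pmf pmf.map_comp o_def step_within_Cons map_pmf_const)
  next
    case True
    then show ?thesis
      using assms(1)[OF True] Suc
      by (cases i) (simp_all add: map_bind_pmf pmf.map_comp o_def step_within_Cons map_pmf_const)
  qed
qed simp

lemma pmf_eq_1_imp_return_pmf: "pmf p x = 1 \<Longrightarrow> p = return_pmf x"
proof -
  assume "pmf p x = 1"
  then have "measure_pmf.prob p (- {x}) = 0"
    using measure_pmf.prob_compl[of "{x}" p] by (simp add: measure_pmf_single Compl_eq_Diff_UNIV)
  then show ?thesis
    by (auto simp: measure_pmf_zero_iff simp flip: set_pmf_subset_singleton)
qed

lemma in_Pi_BC_imp_return_pmf:
  "in_Pi_BC H piE D1 \<pi> \<Longrightarrow> h < H \<Longrightarrow> s \<in> states_at h D1 \<Longrightarrow> \<pi> h s = return_pmf (piE h s)"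
  by (auto simp: in_Pi_BC_def intro!: pmf_eq_1_imp_return_pmf)

lemma prob_in_Tr_in_Pi_BC_eq:
  assumes "in_Pi_BC H piE D1 \<pi>" and "h < H"
  shows "measure_pmf.prob (traj_pmf rho P \<pi> H) {tr. tr ! h = sa \<and> in_Tr h D1 tr}
       = measure_pmf.prob (traj_pmf rho P (det_policy piE) H) {tr. tr ! h = sa \<and> in_Tr h D1 tr}"
proof -
  define G where "G l = (if l < H then states_at l D1 else {})" for l
  have agree: "\<pi> l s = det_policy piE l s" if "s \<in> G l" for l s
    using in_Pi_BC_imp_return_pmf[OF assms(1)] that by (simp add: G_def det_policy_def split: if_splits)
  have event: "{tr. tr ! h = sa \<and> in_Tr h D1 tr} = step_within G 0 h -` {Some sa}"
    using assms(2) by (auto simp: step_within_def in_Tr_def G_def split: if_splits)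
  have "map_pmf (step_within G 0 h) (traj_pmf rho P \<pi> H)
      = map_pmf (step_within G 0 h) (traj_pmf rho P (det_policy piE) H)"
    unfolding traj_pmf_def map_bind_pmf
    by (intro bind_pmf_cong refl map_pmf_step_within_traj_from[OF agree] assms(2))
  then show ?thesis
    unfolding event measure_map_pmf[symmetric] by simp
qed

lemma occ_eq_prob: "occ rho P \<pi> H h sa = measure_pmf.prob (traj_pmf rho P \<pi> H) {tr. tr ! h = sa}"
  by (simp add: occ_def pmf_map vimage_def)

lemma sum_list_indicator: "(\<Sum>x\<leftarrow>xs. if Q x then 1 else 0) = real (length (filter Q xs))"
  by (induction xs) auto

lemma d_tilde_eq:
  "d_tilde m n' D1 D1c Denv h sa
     = real (length (filter (\<lambda>tr. tr ! h = sa \<and> in_Tr h D1 tr) Denv)) / real n'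
     + 2 * real (length (filter (\<lambda>tr. tr ! h = sa \<and> \<not> in_Tr h D1 tr) D1c)) / real m"
  by (simp add: d_tilde_def sum_list_indicator)

lemma bc_experiment_eq:
  assumes "m = 2 * k"
  shows "bc_experiment rho P piE H sel m n' =
    bind_pmf (replicate_pmf k (traj_pmf rho P (det_policy piE) H)) (\<lambda>D1.
    bind_pmf (replicate_pmf k (traj_pmf rho P (det_policy piE) H)) (\<lambda>D1c.
      map_pmf (\<lambda>Denv. (D1, D1c, Denv)) (replicate_pmf n' (traj_pmf rho P (sel D1) H))))"
    (is "_ = ?split")
proof -
  let ?X = "traj_pmf rho P (det_policy piE) H"
  let ?Is = "{I. I \<subseteq> {..<m} \<and> card I = m div 2}"
  let ?draw = "\<lambda>I. bind_pmf (replicate_pmf m ?X) (\<lambda>D.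
      let D1 = map (\<lambda>i. D ! i) (filter (\<lambda>i. i \<in> I) [0..<m]);
          D1c = map (\<lambda>i. D ! i) (filter (\<lambda>i. i \<notin> I) [0..<m])
      in map_pmf (\<lambda>Denv. (D1, D1c, Denv)) (replicate_pmf n' (traj_pmf rho P (sel D1) H)))"
  have "finite ?Is"
    by (rule finite_subset[of _ "Pow {..<m}"]) auto
  moreover have "{..<k} \<in> ?Is"
    using assms by simp
  ultimately have set_Is: "set_pmf (pmf_of_set ?Is) = ?Is"
    by (intro set_pmf_of_set) blast+
  have "?draw I = ?split" if "I \<in> ?Is" for I
  proof -
    have "{i \<in> I. i < m} = I" "{i \<in> - I. i < m} = {..<m} - I"
      using that by auto
    then have "card {i \<in> I. i < m} = k" "card {i \<in> - I. i < m} = k"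
      using that assms card_Diff_subset[of I "{..<m}"] finite_subset[of I "{..<m}"] by auto
    moreover have "?draw I = bind_pmf (map_pmf (\<lambda>D. (nths D I, nths D (- I))) (replicate_pmf m ?X))
        (\<lambda>(D1, D1c). map_pmf (\<lambda>Denv. (D1, D1c, Denv)) (replicate_pmf n' (traj_pmf rho P (sel D1) H)))"
      unfolding bind_map_pmf
      by (intro bind_pmf_cong refl) (auto simp: nths_conv_map_nth set_replicate_pmf Let_def)
    ultimately show ?thesis
      by (simp add: map_pmf_nths_replicate_pmf pair_pmf_def bind_assoc_pmf bind_return_pmf
          del: replicate_pmf.simps)
  qed
  then have "bind_pmf (pmf_of_set ?Is) ?draw = bind_pmf (pmf_of_set ?Is) (\<lambda>_. ?split)"
    by (rule bind_pmf_cong[OF refl]) (simp add: set_Is)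
  moreover have "bc_experiment rho P piE H sel m n' = bind_pmf (pmf_of_set ?Is) ?draw"
    unfolding bc_experiment_def iid_list_eq_replicate_pmf by (rule bind_commute_pmf)
  ultimately show ?thesis
    by simp
qed

section \<open>Error of the estimator\<close>

lemma sum_prob_fibers:
  assumes "finite S"
  shows "(\<Sum>s\<in>S. measure_pmf.prob p {x. f x = s \<and> R s x}) = measure_pmf.prob p {x. f x \<in> S \<and> R (f x) x}"
proof -
  have "measure_pmf.prob p (\<Union>s\<in>S. {x. f x = s \<and> R s x}) = (\<Sum>s\<in>S. measure_pmf.prob p {x. f x = s \<and> R s x})"
    by (rule measure_pmf.finite_measure_finite_Union) (auto simp: assms disjoint_family_on_def)
  moreover have "(\<Union>s\<in>S. {x. f x = s \<and> R s x}) = {x. f x \<in> S \<and> R (f x) x}" by auto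
  ultimately show ?thesis by simp
qed

lemma relative_deviation_le:
  fixes K n p L \<theta> :: real
  assumes "0 < n" "0 \<le> p" "0 \<le> L" "0 < \<theta>"
    and dev: "\<bar>K - n * p\<bar> \<le> 2 * sqrt (n * p * L) + 2 * L"
  shows "\<bar>K / n - p\<bar> \<le> \<theta> * p + L / (\<theta> * n) + 2 * L / n"
proof -
  have "2 * sqrt (n * p * L) = 2 * sqrt ((\<theta> * n * p) * (L / \<theta>))"
    using assms(4) by (simp add: field_simps)
  also have "\<dots> \<le> \<theta> * n * p + L / \<theta>"
    using arith_geo_mean_sqrt[of "\<theta> * n * p" "L / \<theta>"] assms(1-4) by simp
  finally have "\<bar>K - n * p\<bar> \<le> \<theta> * n * p + L / \<theta> + 2 * L"
    using dev by linarith
  then have "\<bar>K - n * p\<bar> / n \<le> (\<theta> * n * p + L / \<theta> + 2 * L) / n"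
    using assms(1) by (simp add: divide_right_mono)
  moreover have "\<bar>K / n - p\<bar> = \<bar>K - n * p\<bar> / n"
    using assms(1) by (simp add: field_simps)
  ultimately show ?thesis
    using assms(1,4) by (simp add: field_simps)
qed

lemma scaled_log_le_sample_size:
  fixes c e L L\<^sub>0 N :: real
  assumes "0 \<le> c" "0 < e" "L \<le> 2 * L\<^sub>0" "100 * (c / e) * L\<^sub>0 \<le> N"
  shows "c * L \<le> N * e / 50"
proof -
  have "c * L \<le> c * (2 * L\<^sub>0)"
    by (rule mult_left_mono[OF assms(3,1)])
  also have "\<dots> \<le> N * e / 50"
    using assms(2,4) by (simp add: field_simps)
  finally show ?thesis .
qed

lemma error_budget_le:
  fixes H cS L L\<^sub>0 \<epsilon> m n k :: real
  assumes "5 \<le> H" "1 \<le> cS" "0 < \<epsilon>" "\<epsilon> < 1" "0 \<le> L" "L \<le> 2 * L\<^sub>0"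
    and "m = 2 * k" "0 < k" "0 < n"
    and m: "100 * (H * sqrt H * cS / \<epsilon>) * L\<^sub>0 \<le> m"
    and n: "100 * (H\<^sup>2 * cS / \<epsilon>\<^sup>2) * L\<^sub>0 \<le> n"
  shows "H * (\<epsilon> / (8 * H) + cS * (L / (\<epsilon> / (8 * H) * n) + 2 * L / n)
           + 1 / sqrt H * (H * cS * (L / k)) + cS * (L / (1 / sqrt H * k) + 2 * L / k)) \<le> \<epsilon>"
proof -
  have H: "0 < H" "1 \<le> sqrt H" "sqrt H * sqrt H = H"
    using assms(1) by auto
  have "H * (\<epsilon> / (8 * H) + cS * (L / (\<epsilon> / (8 * H) * n) + 2 * L / n)
           + 1 / sqrt H * (H * cS * (L / k)) + cS * (L / (1 / sqrt H * k) + 2 * L / k))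
      = \<epsilon> / 8 + 8 * (H\<^sup>2 * cS * L) / (\<epsilon> * n) + 2 * (H * cS * L) / n
        + 2 * (H * sqrt H * cS * L) / k + 2 * (H * cS * L) / k"
    using H assms(3,8,9) by (simp add: field_simps power2_eq_square)
  also have "\<dots> \<le> \<epsilon> / 8 + 16 * \<epsilon> / 100 + 4 * \<epsilon> / 100 + 16 * \<epsilon> / 100"
  proof -
    have "H \<le> H\<^sup>2" "H \<le> H * sqrt H" "0 \<le> cS * L"
      using assms(2,5) H by (auto simp: power2_eq_square)
    then have "H * (cS * L) \<le> H\<^sup>2 * (cS * L)" "H * (cS * L) \<le> (H * sqrt H) * (cS * L)"
      by (auto intro: mult_right_mono)
    then have HcS: "H * cS * L \<le> H\<^sup>2 * cS * L" "H * cS * L \<le> H * sqrt H * cS * L"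
      by (simp_all add: mult.assoc)
    have n': "H\<^sup>2 * cS * L \<le> n * \<epsilon>\<^sup>2 / 50"
      using assms(2,3,6) n by (intro scaled_log_le_sample_size) auto
    have m': "H * sqrt H * cS * L \<le> m * \<epsilon> / 50"
      using assms(2,3,6) m H by (intro scaled_log_le_sample_size) auto
    have "8 * (H\<^sup>2 * cS * L) / (\<epsilon> * n) \<le> 16 * \<epsilon> / 100"
      using n' assms(3,9) by (simp add: field_simps power2_eq_square)
    moreover have "2 * (H * cS * L) / n \<le> 4 * \<epsilon> / 100"
    proof -
      have "n * \<epsilon>\<^sup>2 \<le> n * \<epsilon>"
        using assms(3,4,9) by (simp add: power2_eq_square mult_left_le)
      then have "2 * (H * cS * L) \<le> (4 * \<epsilon> / 100) * n"
        using HcS(1) n' by (simp add: algebra_simps)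
      then show ?thesis
        using assms(9) by (simp add: pos_divide_le_eq)
    qed
    moreover have "2 * (H * sqrt H * cS * L) / k + 2 * (H * cS * L) / k \<le> 16 * \<epsilon> / 100"
      using HcS(2) m' assms(7,8) by (simp add: field_simps)
    ultimately show ?thesis
      by linarith
  qed
  also have "\<dots> \<le> \<epsilon>"
    using assms(3) by simp
  finally show ?thesis .
qed

lemma powr_three_halves: "0 \<le> x \<Longrightarrow> x powr (3/2) = x * sqrt x"
proof -
  assume "0 \<le> x"
  have "x powr (3/2) = x powr (1 + 1/2)"
    by simp
  also have "\<dots> = x powr 1 * x powr (1/2)"
    by (rule powr_add)
  finally show ?thesis
    using \<open>0 \<le> x\<close> by (simp add: powr_half_sqrt)
qed

lemma confidence_level_bounds:
  fixes cS H \<delta> :: real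
  assumes "1 \<le> cS" "5 \<le> H" "0 < \<delta>" "\<delta> < 1"
  shows "0 \<le> ln 5 + ln (cS * H / \<delta>)" "ln 5 + ln (cS * H / \<delta>) \<le> 2 * ln (cS * H / \<delta>)"
    "0 < ln (cS * H / \<delta>)" "5 * H * cS * exp (- (ln 5 + ln (cS * H / \<delta>))) = \<delta>"
proof -
  have "H \<le> cS * H"
    using mult_right_mono[OF assms(1), of H] assms(2) by simp
  then have "5 \<le> cS * H"
    using assms(2) by linarith
  also have "\<dots> \<le> cS * H / \<delta>"
    using assms(1-4) by (simp add: le_divide_eq mult_left_le)
  finally have "ln 5 \<le> ln (cS * H / \<delta>)"
    by simp
  moreover have "0 < ln (5::real)"
    by simp
  ultimately show "0 \<le> ln 5 + ln (cS * H / \<delta>)" "ln 5 + ln (cS * H / \<delta>) \<le> 2 * ln (cS * H / \<delta>)"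
    "0 < ln (cS * H / \<delta>)"
    by linarith+
  have "0 < cS * H / \<delta>"
    using assms by simp
  then have "exp (ln 5 + ln (cS * H / \<delta>)) = 5 * (cS * H / \<delta>)"
    by (simp add: exp_add)
  then have "exp (- (ln 5 + ln (cS * H / \<delta>))) = inverse (5 * (cS * H / \<delta>))"
    by (simp only: exp_minus)
  then show "5 * H * cS * exp (- (ln 5 + ln (cS * H / \<delta>))) = \<delta>"
    using assms by (simp add: field_simps)
qed

locale bc_setup =
  fixes S A :: "nat set" and rho :: "nat pmf" and P :: transition and piE :: "nat \<Rightarrow> nat \<Rightarrow> nat"
    and H :: nat and sel :: "traj list \<Rightarrow> policy"
  assumes mdp: "valid_mdp S A rho P"
    and expert_valid: "\<And>h s. s \<in> S \<Longrightarrow> piE h s \<in> A"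
    and sel_valid: "\<And>D1. valid_policy S A (sel D1)"
    and sel_BC: "\<And>D1. in_Pi_BC H piE D1 (sel D1)"
begin

abbreviation expert :: "traj pmf" where
  "expert \<equiv> traj_pmf rho P (det_policy piE) H"

abbreviation bc :: "traj list \<Rightarrow> traj pmf" where
  "bc D1 \<equiv> traj_pmf rho P (sel D1) H"

abbreviation covered :: "traj list \<Rightarrow> nat \<Rightarrow> nat \<Rightarrow> traj \<Rightarrow> bool" where
  "covered D1 h s tr \<equiv> tr ! h = (s, piE h s) \<and> in_Tr h D1 tr"

abbreviation uncovered :: "traj list \<Rightarrow> nat \<Rightarrow> nat \<Rightarrow> traj \<Rightarrow> bool" where
  "uncovered D1 h s tr \<equiv> tr ! h = (s, piE h s) \<and> \<not> in_Tr h D1 tr"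

definition unseen_states_rare :: "real \<Rightarrow> traj list \<Rightarrow> bool" where
  "unseen_states_rare c D1 \<longleftrightarrow>
     (\<forall>l<H. \<forall>s\<in>S. s \<notin> states_at l D1 \<longrightarrow> measure_pmf.prob expert {tr. fst (tr ! l) = s} \<le> c)"

lemma finite_S: "finite S" and finite_A: "finite A"
  using mdp by (auto simp: valid_mdp_def)

lemma valid_policy_expert: "valid_policy S A (det_policy piE)"
  using expert_valid by (simp add: valid_policy_def det_policy_def)

lemma expert_state: "tr \<in> set_pmf expert \<Longrightarrow> h < H \<Longrightarrow> fst (tr ! h) \<in> S"
  by (rule set_pmf_traj_pmf(1)[OF mdp valid_policy_expert])

lemma expert_action: "tr \<in> set_pmf expert \<Longrightarrow> h < H \<Longrightarrow> snd (tr ! h) = piE h (fst (tr ! h))"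
  using set_pmf_traj_pmf(2)[OF mdp valid_policy_expert] by (simp add: det_policy_def)

lemma bc_action_in_Tr:
  assumes "tr \<in> set_pmf (bc D1)" "h < H" "in_Tr h D1 tr"
  shows "snd (tr ! h) = piE h (fst (tr ! h))"
proof -
  have "sel D1 h (fst (tr ! h)) = return_pmf (piE h (fst (tr ! h)))"
    using in_Pi_BC_imp_return_pmf[OF sel_BC] assms(2,3) by (simp add: in_Tr_def)
  then show ?thesis
    using set_pmf_traj_pmf(2)[OF mdp sel_valid assms(1,2)] by simp
qed

lemma occ_expert_off_action:
  assumes "h < H" "a \<noteq> piE h s"
  shows "occ rho P (det_policy piE) H h (s, a) = 0"
  unfolding occ_eq_prob measure_pmf_zero_iff using expert_action assms by fastforce

lemma d_tilde_off_action:
  assumes "set D1c \<subseteq> set_pmf expert" "set Denv \<subseteq> set_pmf (bc D1)" "h < H" "a \<noteq> piE h s"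
  shows "d_tilde m n' D1 D1c Denv h (s, a) = 0"
proof -
  have "filter (\<lambda>tr. tr ! h = (s, a) \<and> in_Tr h D1 tr) Denv = []"
    using bc_action_in_Tr[of _ D1 h] assms by (fastforce simp: filter_empty_conv)
  moreover have "filter (\<lambda>tr. tr ! h = (s, a) \<and> \<not> in_Tr h D1 tr) D1c = []"
    using expert_action[of _ h] assms by (fastforce simp: filter_empty_conv)
  ultimately show ?thesis
    by (simp add: d_tilde_eq)
qed

lemma occ_expert_on_action:
  assumes "h < H"
  shows "occ rho P (det_policy piE) H h (s, piE h s)
     = measure_pmf.prob (bc D1) {tr. covered D1 h s tr} + measure_pmf.prob expert {tr. uncovered D1 h s tr}"
proof -
  have "occ rho P (det_policy piE) H h (s, piE h s)
      = measure_pmf.prob expert ({tr. covered D1 h s tr} \<union> {tr. uncovered D1 h s tr})"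
    unfolding occ_eq_prob by (auto intro: arg_cong[where f = "measure_pmf.prob expert"])
  also have "\<dots> = measure_pmf.prob expert {tr. covered D1 h s tr} + measure_pmf.prob expert {tr. uncovered D1 h s tr}"
    by (rule measure_pmf.finite_measure_Union) auto
  finally show ?thesis
    using prob_in_Tr_in_Pi_BC_eq[OF sel_BC assms] by simp
qed

lemma sum_prob_covered_le_1: "(\<Sum>s\<in>S. measure_pmf.prob (bc D1) {tr. covered D1 h s tr}) \<le> 1"
proof -
  have "(\<Sum>s\<in>S. measure_pmf.prob (bc D1) {tr. covered D1 h s tr})
      = (\<Sum>s\<in>S. measure_pmf.prob (bc D1) {tr. fst (tr ! h) = s \<and> covered D1 h s tr})"
    by (intro sum.cong refl arg_cong[where f = "measure_pmf.prob (bc D1)"]) (auto simp: prod_eq_iff)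
  also have "\<dots> = measure_pmf.prob (bc D1) {tr. fst (tr ! h) \<in> S \<and> covered D1 h (fst (tr ! h)) tr}"
    by (rule sum_prob_fibers[OF finite_S])
  finally show ?thesis by simp
qed

lemma prob_unseen_state_le:
  assumes "unseen_states_rare c D1" and "l < H" and "0 \<le> c"
  shows "measure_pmf.prob expert {tr. fst (tr ! l) \<notin> states_at l D1} \<le> real (card S) * c"
proof -
  have "measure_pmf.prob expert {tr. fst (tr ! l) \<notin> states_at l D1}
      = measure_pmf.prob expert {tr. fst (tr ! l) \<in> S - states_at l D1 \<and> True}"
    using expert_state[OF _ assms(2)] by (intro measure_prob_cong_0) (auto simp: pmf_eq_0_set_pmf)
  also have "\<dots> = (\<Sum>s\<in>S - states_at l D1. measure_pmf.prob expert {tr. fst (tr ! l) = s \<and> True})"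
    using sum_prob_fibers[of "S - states_at l D1" expert "\<lambda>tr. fst (tr ! l)" "\<lambda>_ _. True"] finite_S
    by simp
  also have "\<dots> \<le> (\<Sum>s\<in>S - states_at l D1. c)"
    using assms(1,2) by (intro sum_mono) (simp add: unseen_states_rare_def)
  also have "\<dots> \<le> real (card S) * c"
    using finite_S assms(3) by (simp add: card_mono mult_right_mono)
  finally show ?thesis .
qed

lemma sum_prob_uncovered_le:
  assumes "unseen_states_rare c D1" and "h < H" and "0 \<le> c"
  shows "(\<Sum>s\<in>S. measure_pmf.prob expert {tr. uncovered D1 h s tr}) \<le> real H * real (card S) * c"
proof -
  have "(\<Sum>s\<in>S. measure_pmf.prob expert {tr. uncovered D1 h s tr})
      = (\<Sum>s\<in>S. measure_pmf.prob expert {tr. fst (tr ! h) = s \<and> uncovered D1 h s tr})"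
    by (intro sum.cong refl arg_cong[where f = "measure_pmf.prob expert"]) (auto simp: prod_eq_iff)
  also have "\<dots> = measure_pmf.prob expert {tr. fst (tr ! h) \<in> S \<and> uncovered D1 h (fst (tr ! h)) tr}"
    by (rule sum_prob_fibers[OF finite_S])
  \<comment> \<open>an uncovered trajectory meets a state missing from \<open>D1\<close> at some step \<open>l \<le> h\<close>\<close>
  also have "\<dots> \<le> measure_pmf.prob expert (\<Union>l\<le>h. {tr. fst (tr ! l) \<notin> states_at l D1})"
    by (rule measure_pmf.finite_measure_mono) (auto simp: in_Tr_def)
  also have "\<dots> \<le> (\<Sum>l\<le>h. measure_pmf.prob expert {tr. fst (tr ! l) \<notin> states_at l D1})"
    by (rule measure_UNION_le) auto
  also have "\<dots> \<le> (\<Sum>l\<le>h. real (card S) * c)"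
    using assms by (intro sum_mono prob_unseen_state_le) auto
  also have "\<dots> \<le> real H * (real (card S) * c)"
    using assms(2,3) by (simp add: mult_right_mono)
  finally show ?thesis by (simp add: mult.assoc)
qed

lemma sum_error_eq_on_expert_actions:
  assumes "h < H" "set D1c \<subseteq> set_pmf expert" "set Denv \<subseteq> set_pmf (bc D1)"
  shows "(\<Sum>sa\<in>S \<times> A. \<bar>d_tilde m n' D1 D1c Denv h sa - occ rho P (det_policy piE) H h sa\<bar>)
    = (\<Sum>s\<in>S. \<bar>d_tilde m n' D1 D1c Denv h (s, piE h s) - occ rho P (det_policy piE) H h (s, piE h s)\<bar>)"
proof -
  let ?err = "\<lambda>sa. \<bar>d_tilde m n' D1 D1c Denv h sa - occ rho P (det_policy piE) H h sa\<bar>"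
  have "(\<Sum>sa\<in>S \<times> A. ?err sa) = (\<Sum>s\<in>S. \<Sum>a\<in>A. ?err (s, a))"
    by (simp add: sum.cartesian_product)
  also have "\<dots> = (\<Sum>s\<in>S. ?err (s, piE h s))"
  proof (rule sum.cong[OF refl])
    fix s assume "s \<in> S"
    then show "(\<Sum>a\<in>A. ?err (s, a)) = ?err (s, piE h s)"
      using expert_valid finite_A assms occ_expert_off_action d_tilde_off_action
      by (subst sum.remove[of _ "piE h s"]) auto
  qed
  finally show ?thesis .
qed

lemma error_on_expert_action_le:
  assumes "h < H" and "real m = 2 * real (length D1c)" and "0 < length D1c" "0 < length Denv"
    and "0 \<le> L" "0 < \<theta>\<^sub>1" "0 < \<theta>\<^sub>2"
    and "count_concentrated L expert (uncovered D1 h s) D1c"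
    and "count_concentrated L (bc D1) (covered D1 h s) Denv"
  shows "\<bar>d_tilde m (length Denv) D1 D1c Denv h (s, piE h s) - occ rho P (det_policy piE) H h (s, piE h s)\<bar>
    \<le> (\<theta>\<^sub>1 * measure_pmf.prob (bc D1) {tr. covered D1 h s tr}
          + L / (\<theta>\<^sub>1 * real (length Denv)) + 2 * L / real (length Denv))
      + (\<theta>\<^sub>2 * measure_pmf.prob expert {tr. uncovered D1 h s tr}
          + L / (\<theta>\<^sub>2 * real (length D1c)) + 2 * L / real (length D1c))"
proof -
  let ?K\<^sub>1 = "real (length (filter (covered D1 h s) Denv))" and ?n = "real (length Denv)"
  let ?K\<^sub>2 = "real (length (filter (uncovered D1 h s) D1c))" and ?k = "real (length D1c)"
  have "d_tilde m (length Denv) D1 D1c Denv h (s, piE h s) = ?K\<^sub>1 / ?n + ?K\<^sub>2 / ?k"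
    using assms(2) by (simp add: d_tilde_eq)
  moreover note occ_expert_on_action[OF assms(1), of s D1]
  moreover have "\<bar>?K\<^sub>1 / ?n - measure_pmf.prob (bc D1) {tr. covered D1 h s tr}\<bar>
      \<le> \<theta>\<^sub>1 * measure_pmf.prob (bc D1) {tr. covered D1 h s tr} + L / (\<theta>\<^sub>1 * ?n) + 2 * L / ?n"
    using assms by (intro relative_deviation_le) (auto simp: count_concentrated_def)
  moreover have "\<bar>?K\<^sub>2 / ?k - measure_pmf.prob expert {tr. uncovered D1 h s tr}\<bar>
      \<le> \<theta>\<^sub>2 * measure_pmf.prob expert {tr. uncovered D1 h s tr} + L / (\<theta>\<^sub>2 * ?k) + 2 * L / ?k"
    using assms by (intro relative_deviation_le) (auto simp: count_concentrated_def)
  ultimately show ?thesis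
    by linarith
qed

lemma step_error_le:
  assumes "h < H" "set D1c \<subseteq> set_pmf expert" "set Denv \<subseteq> set_pmf (bc D1)"
    and "real m = 2 * real (length D1c)" "0 < length D1c" "0 < length Denv"
    and "0 \<le> L" "0 < \<theta>\<^sub>1" "0 < \<theta>\<^sub>2" "0 \<le> c" "unseen_states_rare c D1"
    and "\<forall>s\<in>S. count_concentrated L expert (uncovered D1 h s) D1c"
    and "\<forall>s\<in>S. count_concentrated L (bc D1) (covered D1 h s) Denv"
  defines "n \<equiv> real (length Denv)" and "k \<equiv> real (length D1c)"
  shows "(\<Sum>sa\<in>S \<times> A. \<bar>d_tilde m (length Denv) D1 D1c Denv h sa - occ rho P (det_policy piE) H h sa\<bar>)
    \<le> \<theta>\<^sub>1 + real (card S) * (L / (\<theta>\<^sub>1 * n) + 2 * L / n)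
      + \<theta>\<^sub>2 * (real H * real (card S) * c) + real (card S) * (L / (\<theta>\<^sub>2 * k) + 2 * L / k)"
proof -
  let ?p\<^sub>1 = "\<lambda>s. measure_pmf.prob (bc D1) {tr. covered D1 h s tr}"
  let ?p\<^sub>2 = "\<lambda>s. measure_pmf.prob expert {tr. uncovered D1 h s tr}"
  have "(\<Sum>sa\<in>S \<times> A. \<bar>d_tilde m (length Denv) D1 D1c Denv h sa - occ rho P (det_policy piE) H h sa\<bar>)
      \<le> (\<Sum>s\<in>S. (\<theta>\<^sub>1 * ?p\<^sub>1 s + L / (\<theta>\<^sub>1 * n) + 2 * L / n) + (\<theta>\<^sub>2 * ?p\<^sub>2 s + L / (\<theta>\<^sub>2 * k) + 2 * L / k))"
    unfolding sum_error_eq_on_expert_actions[OF assms(1-3)] n_def k_def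
    using assms by (intro sum_mono error_on_expert_action_le) auto
  also have "\<dots> = \<theta>\<^sub>1 * (\<Sum>s\<in>S. ?p\<^sub>1 s) + real (card S) * (L / (\<theta>\<^sub>1 * n) + 2 * L / n)
      + \<theta>\<^sub>2 * (\<Sum>s\<in>S. ?p\<^sub>2 s) + real (card S) * (L / (\<theta>\<^sub>2 * k) + 2 * L / k)"
    by (simp add: sum.distrib sum_distrib_left algebra_simps)
  also have "\<dots> \<le> \<theta>\<^sub>1 + real (card S) * (L / (\<theta>\<^sub>1 * n) + 2 * L / n)
      + \<theta>\<^sub>2 * (real H * real (card S) * c) + real (card S) * (L / (\<theta>\<^sub>2 * k) + 2 * L / k)"
    using sum_prob_covered_le_1[of D1 h] sum_prob_uncovered_le[OF assms(11,1,10)] assms(8,9)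
    by (intro add_mono mult_left_mono order_refl) auto
  finally show ?thesis .
qed

lemma prob_not_unseen_states_rare:
  assumes "0 < k" and "0 \<le> L"
  shows "measure_pmf.prob (replicate_pmf k expert) {D1. \<not> unseen_states_rare (L / real k) D1}
           \<le> real H * real (card S) * exp (- L)"
proof -
  let ?d = "\<lambda>l s. measure_pmf.prob expert {tr. fst (tr ! l) = s}"
  let ?bad = "\<lambda>(l, s). {D1. (\<forall>tr\<in>set D1. \<not> fst (tr ! l) = s) \<and> L / real k < ?d l s}"
  have "measure_pmf.prob (replicate_pmf k expert) {D1. \<not> unseen_states_rare (L / real k) D1}
      \<le> measure_pmf.prob (replicate_pmf k expert) (\<Union>ls\<in>{..<H} \<times> S. ?bad ls)"
    by (rule measure_pmf.finite_measure_mono) (auto simp: unseen_states_rare_def states_at_def not_le)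
  also have "\<dots> \<le> (\<Sum>ls\<in>{..<H} \<times> S. measure_pmf.prob (replicate_pmf k expert) (?bad ls))"
    by (rule measure_UNION_le) (auto simp: finite_S)
  also have "\<dots> \<le> (\<Sum>ls\<in>{..<H} \<times> S. exp (- L))"
  proof (rule sum_mono)
    fix ls assume "ls \<in> {..<H} \<times> S"
    obtain l s where ls: "ls = (l, s)" by (cases ls)
    have "measure_pmf.prob (replicate_pmf k expert) (?bad (l, s)) \<le> exp (- L)"
    proof (cases "L / real k < ?d l s")
      case True
      have "measure_pmf.prob (replicate_pmf k expert) (?bad (l, s))
          \<le> measure_pmf.prob (replicate_pmf k expert) {D1. \<forall>tr\<in>set D1. \<not> fst (tr ! l) = s}"
        by (rule measure_pmf.finite_measure_mono) auto
      also have "\<dots> \<le> exp (- real k * ?d l s)"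
        by (rule prob_replicate_pmf_never)
      also have "\<dots> \<le> exp (- L)"
        using True assms(1) by (simp add: field_simps)
      finally show ?thesis .
    qed simp
    then show "measure_pmf.prob (replicate_pmf k expert) (?bad ls) \<le> exp (- L)"
      by (simp add: ls)
  qed
  also have "\<dots> = real H * real (card S) * exp (- L)"
    by (simp add: card_cartesian_product)
  finally show ?thesis .
qed


lemma total_error_le:
  assumes "set D1c \<subseteq> set_pmf expert" "length D1c = k" "set Denv \<subseteq> set_pmf (bc D1)" "length Denv = n'"
    and "m = 2 * k" "0 < k" "0 < n'" "0 \<le> L" "0 < \<theta>\<^sub>1" "0 < \<theta>\<^sub>2"
    and "unseen_states_rare (L / real k) D1"
    and "\<forall>h<H. \<forall>s\<in>S. count_concentrated L expert (uncovered D1 h s) D1c"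
    and "\<forall>h<H. \<forall>s\<in>S. count_concentrated L (bc D1) (covered D1 h s) Denv"
    and budget: "real H * (\<theta>\<^sub>1 + real (card S) * (L / (\<theta>\<^sub>1 * real n') + 2 * L / real n')
      + \<theta>\<^sub>2 * (real H * real (card S) * (L / real k))
      + real (card S) * (L / (\<theta>\<^sub>2 * real k) + 2 * L / real k)) \<le> \<epsilon>"
  shows "(\<Sum>h<H. \<Sum>sa\<in>S \<times> A. \<bar>d_tilde m n' D1 D1c Denv h sa - occ rho P (det_policy piE) H h sa\<bar>) \<le> \<epsilon>"
proof -
  have "(\<Sum>h<H. \<Sum>sa\<in>S \<times> A. \<bar>d_tilde m n' D1 D1c Denv h sa - occ rho P (det_policy piE) H h sa\<bar>)
      \<le> (\<Sum>h<H. \<theta>\<^sub>1 + real (card S) * (L / (\<theta>\<^sub>1 * real n') + 2 * L / real n')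
        + \<theta>\<^sub>2 * (real H * real (card S) * (L / real k))
        + real (card S) * (L / (\<theta>\<^sub>2 * real k) + 2 * L / real k))"
    unfolding \<open>length Denv = n'\<close>[symmetric] \<open>length D1c = k\<close>[symmetric]
    using assms by (intro sum_mono step_error_le) auto
  also have "\<dots> \<le> \<epsilon>"
    using budget by simp
  finally show ?thesis .
qed

lemma estimation_error_whp:
  assumes "m = 2 * k" "0 < k" "0 < n'" "0 \<le> L" "0 < \<theta>\<^sub>1" "0 < \<theta>\<^sub>2"
    and budget: "real H * (\<theta>\<^sub>1 + real (card S) * (L / (\<theta>\<^sub>1 * real n') + 2 * L / real n')
      + \<theta>\<^sub>2 * (real H * real (card S) * (L / real k))
      + real (card S) * (L / (\<theta>\<^sub>2 * real k) + 2 * L / real k)) \<le> \<epsilon>"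
  shows "1 - 5 * real H * real (card S) * exp (- L) \<le> measure_pmf.prob (bc_experiment rho P piE H sel m n')
      {(D1, D1c, Denv). (\<Sum>h<H. \<Sum>sa\<in>S \<times> A.
          \<bar>d_tilde m n' D1 D1c Denv h sa - occ rho P (det_policy piE) H h sa\<bar>) \<le> \<epsilon>}"
proof -
  let ?HS = "{..<H} \<times> S"
  define Q\<^sub>2 where "Q\<^sub>2 D1 D1c \<longleftrightarrow> (\<forall>i\<in>?HS. count_concentrated L expert (uncovered D1 (fst i) (snd i)) D1c)"
    for D1 D1c
  define Q\<^sub>3 where "Q\<^sub>3 D1 Denv \<longleftrightarrow> (\<forall>i\<in>?HS. count_concentrated L (bc D1) (covered D1 (fst i) (snd i)) Denv)"
    for D1 Denv
  have card_HS: "real (card ?HS) = real H * real (card S)"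
    by (simp add: card_cartesian_product)
  have "1 - (real H * real (card S) * exp (- L) + real (card ?HS) * (2 * exp (- L)) + real (card ?HS) * (2 * exp (- L)))
      \<le> measure_pmf.prob (bc_experiment rho P piE H sel m n')
      {(D1, D1c, Denv). (\<Sum>h<H. \<Sum>sa\<in>S \<times> A.
          \<bar>d_tilde m n' D1 D1c Denv h sa - occ rho P (det_policy piE) H h sa\<bar>) \<le> \<epsilon>}"
    unfolding bc_experiment_eq[OF assms(1)]
  proof (rule prob_three_stage_sampling_ge[where ?Q\<^sub>1.0 = "unseen_states_rare (L / real k)"
        and ?Q\<^sub>2.0 = Q\<^sub>2 and ?Q\<^sub>3.0 = Q\<^sub>3])
    show "measure_pmf.prob (replicate_pmf k expert) {D1. \<not> unseen_states_rare (L / real k) D1}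
        \<le> real H * real (card S) * exp (- L)"
      using assms by (intro prob_not_unseen_states_rare)
  next
    fix D1
    show "measure_pmf.prob (replicate_pmf k expert) {D1c. \<not> Q\<^sub>2 D1 D1c} \<le> real (card ?HS) * (2 * exp (- L))"
      using prob_ex_not_count_concentrated[OF assms(4), of ?HS k expert "\<lambda>i. uncovered D1 (fst i) (snd i)"]
      by (simp add: Q\<^sub>2_def finite_S)
    show "measure_pmf.prob (replicate_pmf n' (bc D1)) {Denv. \<not> Q\<^sub>3 D1 Denv} \<le> real (card ?HS) * (2 * exp (- L))"
      using prob_ex_not_count_concentrated[OF assms(4), of ?HS n' "bc D1" "\<lambda>i. covered D1 (fst i) (snd i)"]
      by (simp add: Q\<^sub>3_def finite_S)
  next
    fix D1 D1c Denv
    assume "D1c \<in> set_pmf (replicate_pmf k expert)" "Denv \<in> set_pmf (replicate_pmf n' (bc D1))"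
      and rare: "unseen_states_rare (L / real k) D1" and "Q\<^sub>2 D1 D1c" "Q\<^sub>3 D1 Denv"
    then have "set D1c \<subseteq> set_pmf expert" "length D1c = k" "set Denv \<subseteq> set_pmf (bc D1)" "length Denv = n'"
      and "\<forall>h<H. \<forall>s\<in>S. count_concentrated L expert (uncovered D1 h s) D1c"
        "\<forall>h<H. \<forall>s\<in>S. count_concentrated L (bc D1) (covered D1 h s) Denv"
      by (auto simp: set_replicate_pmf Q\<^sub>2_def Q\<^sub>3_def)
    from total_error_le[OF this(1-4) assms(1-6) rare this(5,6) budget]
    show "(D1, D1c, Denv) \<in> {(D1, D1c, Denv). (\<Sum>h<H. \<Sum>sa\<in>S \<times> A.
          \<bar>d_tilde m n' D1 D1c Denv h sa - occ rho P (det_policy piE) H h sa\<bar>) \<le> \<epsilon>}"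
      by simp
  qed
  then show ?thesis
    unfolding card_HS by (simp add: algebra_simps)
qed

lemma estimation_error_whp_sample_sizes:
  assumes "5 \<le> H" "0 < \<epsilon>" "\<epsilon> < 1" "0 < \<delta>" "\<delta> < 1" "even m"
    and m: "real m \<ge> 100 * (real H powr (3/2) * real (card S) / \<epsilon>) * ln (real (card S) * real H / \<delta>)"
    and n: "real n' \<ge> 100 * (real H ^ 2 * real (card S) / \<epsilon>\<^sup>2) * ln (real (card S) * real H / \<delta>)"
  shows "1 - \<delta> \<le> measure_pmf.prob (bc_experiment rho P piE H sel m n')
      {(D1, D1c, Denv). (\<Sum>h<H. \<Sum>sa\<in>S \<times> A.
          \<bar>d_tilde m n' D1 D1c Denv h sa - occ rho P (det_policy piE) H h sa\<bar>) \<le> \<epsilon>}"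
proof -
  define L\<^sub>0 where "L\<^sub>0 = ln (real (card S) * real H / \<delta>)"
  define L where "L = ln 5 + L\<^sub>0"
  have cS: "1 \<le> real (card S)"
    using mdp finite_S by (auto simp: valid_mdp_def Suc_le_eq card_gt_0_iff)
  have H: "5 \<le> real H" "real H powr (3/2) = real H * sqrt (real H)"
    using assms(1) powr_three_halves[of "real H"] by auto
  note L = confidence_level_bounds[OF cS H(1) assms(4,5), folded L\<^sub>0_def L_def]
  have "0 < 100 * (real H powr (3/2) * real (card S) / \<epsilon>) * L\<^sub>0"
    "0 < 100 * (real H ^ 2 * real (card S) / \<epsilon>\<^sup>2) * L\<^sub>0"
    using H cS assms(2) L(3) by simp_all
  then have "0 < real m" "0 < real n'"
    using m n unfolding L\<^sub>0_def by linarith+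
  define k where "k = m div 2"
  have k: "m = 2 * k" "0 < k"
    using assms(6) \<open>0 < real m\<close> by (auto simp: k_def)
  have budget: "real H * (\<epsilon> / (8 * real H) + real (card S) * (L / (\<epsilon> / (8 * real H) * real n') + 2 * L / real n')
      + 1 / sqrt (real H) * (real H * real (card S) * (L / real k))
      + real (card S) * (L / (1 / sqrt (real H) * real k) + 2 * L / real k)) \<le> \<epsilon>"
    using m n k \<open>0 < real n'\<close>
    by (intro error_budget_le[OF H(1) cS assms(2,3) L(1,2)]) (auto simp: H(2) L\<^sub>0_def)
  have "0 < n'" "0 < \<epsilon> / (8 * real H)" "0 < 1 / sqrt (real H)"
    using \<open>0 < real n'\<close> H(1) assms(2) by auto
  from estimation_error_whp[OF k this(1) L(1) this(2,3) budget] show ?thesis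
    unfolding L(4) .
qed

end

theorem lemma4:
  shows "\<exists>C::real>0. \<forall>S A rho P piE H sel m n' \<epsilon> \<delta>.
    valid_mdp S A rho P \<and> H \<ge> 5 \<and>
    (\<forall>h s. s \<in> S \<longrightarrow> piE h s \<in> A) \<and>
    (\<forall>D1. valid_policy S A (sel D1) \<and> in_Pi_BC H piE D1 (sel D1)) \<and>
    0 < \<epsilon> \<and> \<epsilon> < 1 \<and> 0 < \<delta> \<and> \<delta> < 1 \<and> even m \<and>
    real m \<ge> C * (real H powr (3/2) * real (card S) / \<epsilon>) * ln (real (card S) * real H / \<delta>) \<and>
    real n' \<ge> C * (real H ^ 2 * real (card S) / \<epsilon>\<^sup>2) * ln (real (card S) * real H / \<delta>)
    \<longrightarrow>
    measure_pmf.prob (bc_experiment rho P piE H sel m n')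
      {(D1, D1c, Denv). (\<Sum>h<H. \<Sum>sa\<in>S \<times> A.
          \<bar>d_tilde m n' D1 D1c Denv h sa - occ rho P (det_policy piE) H h sa\<bar>) \<le> \<epsilon>}
      \<ge> 1 - \<delta>"
proof (intro exI[of _ "100::real"] conjI allI impI, goal_cases)
  case 1
  show ?case by simp
next
  case (2 S A rho P piE H sel m n' \<epsilon> \<delta>)
  then interpret bc_setup S A rho P piE H sel
    by unfold_locales auto
  from 2 show ?case
    by (intro estimation_error_whp_sample_sizes) auto
qed

end
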